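(* Let $k\ge5$ and $H=P_k$, the path on $k$ vertices. Then for every $p\in[0,1)$ there is no deterministic algorithm solving the Delayed $H$-Node-Deletion Problem with predictions that has both consistency less than $k-p(k-1)$ and robustness less than $k+\frac{p}{1-p}$.
   Context: All graphs are finite, simple and undirected. An induced copy of $H$ in $G$ is an induced subgraph isomorphic to $H$; $G$ is $H$-free if it has none. An online graph $G$ has vertices $v_1,\dots,v_n$ revealed one at a time; $G_t=G[\{v_1,\dots,v_t\}]$. Delayed $H$-Node-Deletion Problem with predictions: when $v_t$ is revealed the algorithm receives a bit $u_t(G)\in\{0,1\}$; it must choose sets $S_1\subseteq\dots\subseteq S_n$ with $S_t\subseteq V(G_t)$ and $G_t-S_t$ $H$-free for each $t$, where $S_t$ depends only on $G_t$ and $u_1(G),\dots,u_t(G)$; the cost is $|S_n|$. $\mathrm{OPT}(G)$ is the minimum size of $S\subseteq V(G)$ with $G-S$ $H$-free. The advice is correct if the set of vertices with bit $1$ is a minimum-size such set. An algorithm is $(r,w)$-competitive if there is a constant $\alpha\ge0$ such that for every online graph $G$: for some correct advice its cost is at most $r\cdot\mathrm{OPT}(G)+\alpha$, and for every advice (correct or not) its cost is at most $w\cdot\mathrm{OPT}(G)+\alpha$. Consistency (resp. robustness) is the infimum of such $r$ (resp. $w$). *)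

theory Defs
  imports Complex_Main
begin

text \<open>An online graph with n vertices v_1..v_n is represented on the vertex set
  {0..<n} (vertex v_t is the number t-1), with edge relation E :: nat => nat => bool.\<close>

definition simple_graph :: "('a \<Rightarrow> 'a \<Rightarrow> bool) \<Rightarrow> bool" where
  "simple_graph E \<longleftrightarrow> (\<forall>x y. E x y \<longrightarrow> E y x) \<and> (\<forall>x. \<not> E x x)"

definition has_induced_copy ::
  "'b set \<Rightarrow> ('b \<Rightarrow> 'b \<Rightarrow> bool) \<Rightarrow> 'a set \<Rightarrow> ('a \<Rightarrow> 'a \<Rightarrow> bool) \<Rightarrow> bool" where
  "has_induced_copy VH EH V E \<longleftrightarrow>
     (\<exists>f. f ` VH \<subseteq> V \<and> inj_on f VH \<and>
          (\<forall>x\<in>VH. \<forall>y\<in>VH. E (f x) (f y) \<longleftrightarrow> EH x y))"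

definition H_free ::
  "'b set \<Rightarrow> ('b \<Rightarrow> 'b \<Rightarrow> bool) \<Rightarrow> 'a set \<Rightarrow> ('a \<Rightarrow> 'a \<Rightarrow> bool) \<Rightarrow> bool" where
  "H_free VH EH V E \<longleftrightarrow> \<not> has_induced_copy VH EH V E"

definition path_V :: "nat \<Rightarrow> nat set" where
  "path_V k = {0..<k}"

definition path_E :: "nat \<Rightarrow> nat \<Rightarrow> bool" where
  "path_E i j \<longleftrightarrow> i + 1 = j \<or> j + 1 = i"

definition OPT ::
  "'b set \<Rightarrow> ('b \<Rightarrow> 'b \<Rightarrow> bool) \<Rightarrow> nat \<Rightarrow> (nat \<Rightarrow> nat \<Rightarrow> bool) \<Rightarrow> nat" where
  "OPT VH EH n E = (LEAST m. \<exists>S. S \<subseteq> {0..<n} \<and> card S = m \<and> H_free VH EH ({0..<n} - S) E)"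

definition correct_advice ::
  "'b set \<Rightarrow> ('b \<Rightarrow> 'b \<Rightarrow> bool) \<Rightarrow> nat \<Rightarrow> (nat \<Rightarrow> nat \<Rightarrow> bool) \<Rightarrow> (nat \<Rightarrow> bool) \<Rightarrow> bool" where
  "correct_advice VH EH n E u \<longleftrightarrow>
     (let S = {i. i < n \<and> u i} in
        H_free VH EH ({0..<n} - S) E \<and> card S = OPT VH EH n E)"

text \<open>A deterministic online algorithm is a function A; at time t it sees only the
  prefix graph G_t (edge relation restricted to {0..<t}) and the advice bits
  u_1..u_t (restricted to {0..<t}), and outputs S_t.\<close>
type_synonym algorithm = "nat \<Rightarrow> (nat \<Rightarrow> nat \<Rightarrow> bool) \<Rightarrow> (nat \<Rightarrow> bool) \<Rightarrow> nat set"

definition restrictE :: "nat \<Rightarrow> (nat \<Rightarrow> nat \<Rightarrow> bool) \<Rightarrow> nat \<Rightarrow> nat \<Rightarrow> bool" where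
  "restrictE t E = (\<lambda>x y. x < t \<and> y < t \<and> E x y)"

definition restrictU :: "nat \<Rightarrow> (nat \<Rightarrow> bool) \<Rightarrow> nat \<Rightarrow> bool" where
  "restrictU t u = (\<lambda>i. i < t \<and> u i)"

definition alg_set :: "algorithm \<Rightarrow> (nat \<Rightarrow> nat \<Rightarrow> bool) \<Rightarrow> (nat \<Rightarrow> bool) \<Rightarrow> nat \<Rightarrow> nat set" where
  "alg_set A E u t = A t (restrictE t E) (restrictU t u)"

definition valid_alg :: "'b set \<Rightarrow> ('b \<Rightarrow> 'b \<Rightarrow> bool) \<Rightarrow> algorithm \<Rightarrow> bool" where
  "valid_alg VH EH A \<longleftrightarrow>
     (\<forall>n E u. simple_graph E \<longrightarrow>
        (\<forall>t\<in>{1..n}. alg_set A E u t \<subseteq> {0..<t}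
                    \<and> H_free VH EH ({0..<t} - alg_set A E u t) E) \<and>
        (\<forall>t. 1 \<le> t \<and> t < n \<longrightarrow> alg_set A E u t \<subseteq> alg_set A E u (Suc t)))"

definition alg_cost :: "algorithm \<Rightarrow> nat \<Rightarrow> (nat \<Rightarrow> nat \<Rightarrow> bool) \<Rightarrow> (nat \<Rightarrow> bool) \<Rightarrow> nat" where
  "alg_cost A n E u = (if n = 0 then 0 else card (alg_set A E u n))"

definition competitive ::
  "'b set \<Rightarrow> ('b \<Rightarrow> 'b \<Rightarrow> bool) \<Rightarrow> algorithm \<Rightarrow> real \<Rightarrow> real \<Rightarrow> bool" where
  "competitive VH EH A r w \<longleftrightarrow>
     (\<exists>\<alpha>::real. \<alpha> \<ge> 0 \<and>
        (\<forall>n E. simple_graph E \<longrightarrow>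
           (\<exists>u. correct_advice VH EH n E u \<and>
                real (alg_cost A n E u) \<le> r * real (OPT VH EH n E) + \<alpha>) \<and>
           (\<forall>u. real (alg_cost A n E u) \<le> w * real (OPT VH EH n E) + \<alpha>)))"

end

theory Submission
  imports Defs
begin

(* Label the vertices by layers 0..k-1 and join two vertices iff their layers are consecutive;
   for k >= 4 such a layered graph contains an induced P_k iff every layer is nonempty.
   The adversary puts each new vertex into the least layer all of whose earlier vertices the
   algorithm has already deleted, and its advice always marks layer 0.  Hence every vertex except
   the last one of each layer is eventually deleted, so the cost on n vertices is at least n - k,
   while any single layer is a feasible deletion set.  Appending n + 1 vertices to each of the
   layers 1..k-1 makes layer 0 the unique optimum, so the advice becomes correct, and the
   algorithm, which cannot tell the two inputs apart up to time n, pays at least n - (k - 1).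
   With c_j the size of layer j, robustness gives n - k <= w c_j + O(1) for j >= 1 and
   consistency gives n - (k - 1) <= r c_0 + O(1); since the c_j sum to n, this forces
   w <= r (w - k + 1), which the two bounds of the theorem violate. *)

definition layered_graph :: "(nat \<Rightarrow> nat) \<Rightarrow> nat \<Rightarrow> nat \<Rightarrow> bool" where
  "layered_graph l = (\<lambda>x y. path_E (l x) (l y))"

definition layer_set :: "(nat \<Rightarrow> nat) \<Rightarrow> nat \<Rightarrow> nat \<Rightarrow> nat set" where
  "layer_set l j n = {v. v < n \<and> l v = j}"

lemma simple_graph_layered_graph: "simple_graph (layered_graph l)"
  unfolding simple_graph_def layered_graph_def path_E_def by auto

lemma path_E_no_twins:
  assumes "4 \<le> k" "x < k" "y < k" "x \<noteq> y"
  shows "\<exists>z<k. path_E x z \<noteq> path_E y z"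
  using assms unfolding path_E_def by presburger

lemma path_self_embedding_surj:
  assumes "4 \<le> k" and into: "\<forall>x<k. g x < k"
    and emb: "\<forall>x<k. \<forall>y<k. path_E (g x) (g y) \<longleftrightarrow> path_E x y"
  shows "g ` {..<k} = {..<k}"
proof (rule endo_inj_surj)
  show "inj_on g {..<k}"
  proof (rule inj_onI)
    fix x y assume "x \<in> {..<k}" "y \<in> {..<k}" "g x = g y"
    then have "\<forall>z<k. path_E x z \<longleftrightarrow> path_E y z"
      using emb by (metis lessThan_iff)
    then show "x = y"
      using path_E_no_twins[OF \<open>4 \<le> k\<close>] \<open>x \<in> {..<k}\<close> \<open>y \<in> {..<k}\<close> by blast
  qed
qed (use into in auto)

lemma has_induced_path_if_layers_hit:
  assumes "\<forall>i<k. \<exists>v\<in>V. l v = i"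
  shows "has_induced_copy (path_V k) path_E V (layered_graph l)"
proof -
  obtain f where f: "\<forall>i<k. f i \<in> V \<and> l (f i) = i"
    using assms by metis
  then have "inj_on f (path_V k)"
    unfolding path_V_def by (metis atLeastLessThan_iff inj_onI)
  with f show ?thesis
    unfolding has_induced_copy_def layered_graph_def path_V_def by (intro exI[of _ f]) auto
qed

lemma layers_hit_if_has_induced_path:
  assumes "4 \<le> k" and labels: "\<forall>v\<in>V. l v < k"
    and "has_induced_copy (path_V k) path_E V (layered_graph l)"
  shows "\<forall>i<k. \<exists>v\<in>V. l v = i"
proof -
  obtain f where fV: "f ` {0..<k} \<subseteq> V"
    and emb: "\<forall>x<k. \<forall>y<k. path_E (l (f x)) (l (f y)) \<longleftrightarrow> path_E x y"
    using assms(3) unfolding has_induced_copy_def path_V_def layered_graph_def by auto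
  have "\<forall>x<k. l (f x) < k"
    using fV labels by (simp add: image_subset_iff)
  then have "(l \<circ> f) ` {..<k} = {..<k}"
    using path_self_embedding_surj[OF \<open>4 \<le> k\<close>, of "l \<circ> f"] emb by auto
  with fV show ?thesis
    by (metis atLeast0LessThan comp_apply image_subset_iff imageE lessThan_iff)
qed

lemma OPT_le_card_layer:
  assumes "4 \<le> k" "\<forall>v<n. l v < k" "j < k"
  shows "OPT (path_V k) path_E n (layered_graph l) \<le> card (layer_set l j n)"
proof -
  have "\<not> has_induced_copy (path_V k) path_E ({0..<n} - layer_set l j n) (layered_graph l)"
  proof
    assume "has_induced_copy (path_V k) path_E ({0..<n} - layer_set l j n) (layered_graph l)"
    with layers_hit_if_has_induced_path[OF \<open>4 \<le> k\<close>] assms(2,3)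
    obtain v where "v \<in> {0..<n} - layer_set l j n" "l v = j"
      by (metis Diff_iff atLeastLessThan_iff)
    then show False
      unfolding layer_set_def by auto
  qed
  then show ?thesis
    unfolding OPT_def H_free_def
    by (intro Least_le exI[of _ "layer_set l j n"]) (auto simp: layer_set_def)
qed

lemma H_free_remainder_contains_layer:
  assumes "H_free (path_V k) path_E ({0..<n} - X) (layered_graph l)"
  shows "\<exists>i<k. layer_set l i n \<subseteq> X"
  using has_induced_path_if_layers_hit[of k "{0..<n} - X" l] assms
  unfolding H_free_def layer_set_def
  by (metis (mono_tags, lifting) Diff_iff atLeastLessThan_iff mem_Collect_eq subsetI zero_le)

lemma alg_set_cong:
  assumes "\<And>x y. x < t \<Longrightarrow> y < t \<Longrightarrow> E x y = E' x y" and "\<And>i. i < t \<Longrightarrow> u i = u' i"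
  shows "alg_set A E u t = alg_set A E' u' t"
proof -
  have "restrictE t E = restrictE t E'" "restrictU t u = restrictU t u'"
    using assms unfolding restrictE_def restrictU_def by (auto intro!: ext)
  then show ?thesis
    unfolding alg_set_def by simp
qed

lemma valid_alg_subset:
  assumes "valid_alg VH EH A" "simple_graph E" "1 \<le> t"
  shows "alg_set A E u t \<subseteq> {0..<t}"
  using assms unfolding valid_alg_def by (meson atLeastAtMost_iff order_refl)

lemma valid_alg_H_free:
  assumes "valid_alg VH EH A" "simple_graph E" "1 \<le> t"
  shows "H_free VH EH ({0..<t} - alg_set A E u t) E"
  using assms unfolding valid_alg_def by (meson atLeastAtMost_iff order_refl)

lemma valid_alg_mono:
  assumes "valid_alg VH EH A" "simple_graph E" "1 \<le> s" "s \<le> t"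
  shows "alg_set A E u s \<subseteq> alg_set A E u t"
  using \<open>s \<le> t\<close>
proof (induction rule: dec_induct)
  case (step m)
  then have "alg_set A E u m \<subseteq> alg_set A E u (Suc m)"
    using assms(1-3) unfolding valid_alg_def by (meson lessI order_trans)
  with step.IH show ?case by blast
qed simp

(* The n + 1 extra vertices in each of the layers 1..k-1 make layer 0 of the prefix the unique
   optimal deletion set. *)
definition padded_layers :: "nat \<Rightarrow> nat \<Rightarrow> (nat \<Rightarrow> nat) \<Rightarrow> nat \<Rightarrow> nat" where
  "padded_layers k n l v = (if v < n then l v else Suc ((v - n) mod (k - 1)))"

definition padded_size :: "nat \<Rightarrow> nat \<Rightarrow> nat" where
  "padded_size k n = n + (k - 1) * (n + 1)"

lemma padded_layers_lt:
  assumes "2 \<le> k" "\<forall>v<n. l v < k"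
  shows "padded_layers k n l v < k"
proof -
  have "(v - n) mod (k - 1) < k - 1"
    using assms(1) by simp
  then have "Suc ((v - n) mod (k - 1)) < k"
    by linarith
  with assms(2) show ?thesis
    unfolding padded_layers_def by simp
qed

lemma layer_set_padded_layers_0:
  "layer_set (padded_layers k n l) 0 (padded_size k n) = layer_set l 0 n"
  unfolding layer_set_def padded_layers_def padded_size_def by auto

lemma card_layer_set_padded_layers:
  assumes "1 \<le> j" "j < k"
  shows "n + 1 \<le> card (layer_set (padded_layers k n l) j (padded_size k n))"
proof -
  define g where "g s = n + (j - 1) + (k - 1) * s" for s
  have "g ` {0..n} \<subseteq> layer_set (padded_layers k n l) j (padded_size k n)"
  proof
    fix x assume "x \<in> g ` {0..n}"
    then obtain s where "s \<le> n" and x: "x = n + (j - 1) + (k - 1) * s"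
      unfolding g_def by auto
    then have "(k - 1) * s + (k - 1) \<le> (k - 1) * (n + 1)"
      by (simp add: mult_le_mono2)
    with x assms have "x < padded_size k n"
      unfolding padded_size_def by linarith
    moreover have "(x - n) mod (k - 1) = j - 1"
    proof -
      have "x - n = (j - 1) + (k - 1) * s" and "j - 1 < k - 1"
        using x assms by auto
      then show ?thesis
        by simp
    qed
    ultimately show "x \<in> layer_set (padded_layers k n l) j (padded_size k n)"
      using assms x unfolding layer_set_def padded_layers_def by auto
  qed
  moreover have "inj_on g {0..n}"
  proof (rule inj_onI)
    fix a b assume "g a = g b"
    then have "(k - 1) * a = (k - 1) * b"
      unfolding g_def by simp
    with assms show "a = b"
      by simp
  qed
  ultimately have "card {0..n} \<le> card (layer_set (padded_layers k n l) j (padded_size k n))"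
    by (metis card_image card_mono finite_Collect_conjI finite_lessThan lessThan_def layer_set_def)
  then show ?thesis
    by simp
qed

lemma correct_advice_padded_layers:
  assumes "4 \<le> k" and labels: "\<forall>v<n. l v < k"
    and correct: "correct_advice (path_V k) path_E (padded_size k n) (layered_graph (padded_layers k n l)) u"
  shows "{i. i < padded_size k n \<and> u i} = layer_set l 0 n"
    and "OPT (path_V k) path_E (padded_size k n) (layered_graph (padded_layers k n l)) = card (layer_set l 0 n)"
proof -
  define U where "U = {i. i < padded_size k n \<and> u i}"
  have "finite U"
    unfolding U_def by simp
  have free: "H_free (path_V k) path_E ({0..<padded_size k n} - U) (layered_graph (padded_layers k n l))"
    and card_U: "card U = OPT (path_V k) path_E (padded_size k n) (layered_graph (padded_layers k n l))"
    using correct unfolding correct_advice_def U_def Let_def by auto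
  have labels': "\<forall>v<padded_size k n. padded_layers k n l v < k"
    using padded_layers_lt[of k n l] \<open>4 \<le> k\<close> labels by simp
  have "card U \<le> card (layer_set l 0 n)"
    using OPT_le_card_layer[OF \<open>4 \<le> k\<close> labels', of 0] \<open>4 \<le> k\<close> card_U
    by (simp add: layer_set_padded_layers_0)
  also have "\<dots> \<le> n"
    using card_mono[of "{..<n}" "layer_set l 0 n"] unfolding layer_set_def by auto
  finally have card_U_le: "card U \<le> n" .
  obtain i where "i < k" and layer_in_U: "layer_set (padded_layers k n l) i (padded_size k n) \<subseteq> U"
    using H_free_remainder_contains_layer[OF free] by blast
  have "i = 0"
  proof (rule ccontr)
    assume "i \<noteq> 0"
    then have "n + 1 \<le> card U"
      using card_layer_set_padded_layers[of i k n l] \<open>i < k\<close> card_mono[OF \<open>finite U\<close> layer_in_U]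
      by linarith
    with card_U_le show False by linarith
  qed
  with layer_in_U have "layer_set l 0 n \<subseteq> U"
    by (simp add: layer_set_padded_layers_0)
  with \<open>card U \<le> card (layer_set l 0 n)\<close> \<open>finite U\<close> have "U = layer_set l 0 n"
    using card_seteq by blast
  then show "{i. i < padded_size k n \<and> u i} = layer_set l 0 n"
    and "OPT (path_V k) path_E (padded_size k n) (layered_graph (padded_layers k n l)) = card (layer_set l 0 n)"
    using card_U unfolding U_def by auto
qed

lemma nonpos_if_multiples_bounded:
  fixes x C :: real
  assumes "\<And>n. 1 \<le> n \<Longrightarrow> real n * x \<le> C"
  shows "x \<le> 0"
proof (rule ccontr)
  assume "\<not> x \<le> 0"
  obtain n :: nat where n: "max 1 (C / x) < real n"
    using reals_Archimedean2 by blast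
  with \<open>\<not> x \<le> 0\<close> have "1 \<le> n" and "C < real n * x"
    by (auto simp: pos_divide_less_eq)
  with assms show False
    by force
qed

lemma consistency_robustness_tradeoff:
  fixes k :: nat and r w \<alpha> :: real and c :: "nat \<Rightarrow> nat \<Rightarrow> real" and opt :: "nat \<Rightarrow> real"
  assumes "1 \<le> k"
    and total: "\<And>n. real n = (\<Sum>j<k. c j n)"
    and opt: "\<And>n j. j < k \<Longrightarrow> 0 \<le> opt n \<and> opt n \<le> c j n"
    and robust: "\<And>n. 1 \<le> n \<Longrightarrow> real n - real k \<le> w * opt n + \<alpha>"
    and consistent: "\<And>n. 1 \<le> n \<Longrightarrow> real n - (real k - 1) \<le> r * c 0 n + \<alpha>"
  shows "0 < r \<and> 0 < w \<and> w \<le> r * (w - real k + 1)"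
proof -
  have "0 < w"
  proof (rule ccontr)
    assume "\<not> 0 < w"
    then have "real n * 1 \<le> real k + \<alpha>" if "1 \<le> n" for n
      using robust[OF that] opt[of 0 n] \<open>1 \<le> k\<close> mult_nonpos_nonneg[of w "opt n"] by auto
    then show False
      using nonpos_if_multiples_bounded[of 1] by fastforce
  qed
  have "0 < r"
  proof (rule ccontr)
    assume "\<not> 0 < r"
    then have "real n * 1 \<le> real k - 1 + \<alpha>" if "1 \<le> n" for n
      using consistent[OF that] opt[of 0 n] \<open>1 \<le> k\<close> mult_nonpos_nonneg[of r "c 0 n"] by auto
    then show False
      using nonpos_if_multiples_bounded[of 1] by fastforce
  qed
  have "real n * (w - r * (w - real k + 1)) \<le> r * (real k - 1) * (real k + \<alpha>) + w * (real k - 1 + \<alpha>)"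
    if "1 \<le> n" for n
  proof -
    have "(real k - 1) * (real n - real k - \<alpha>) = (\<Sum>j\<in>{1..<k}. real n - real k - \<alpha>)"
      using \<open>1 \<le> k\<close> by (simp add: of_nat_diff)
    also have "\<dots> \<le> (\<Sum>j\<in>{1..<k}. w * c j n)"
      using robust[OF that] opt \<open>0 < w\<close>
      by (intro sum_mono) (smt (verit) atLeastLessThan_iff mult_left_mono)
    also have "\<dots> = w * (real n - c 0 n)"
      using total[of n] \<open>1 \<le> k\<close>
      by (simp add: sum_distrib_left atLeast0LessThan[symmetric] sum.atLeast_Suc_lessThan)
    finally have "r * ((real k - 1) * (real n - real k - \<alpha>)) \<le> r * (w * (real n - c 0 n))"
      using \<open>0 < r\<close> by (intro mult_left_mono) auto
    moreover have "w * (real n - (real k - 1) - \<alpha>) \<le> w * (r * c 0 n)"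
      using consistent[OF that] \<open>0 < w\<close> by (intro mult_left_mono) auto
    ultimately show ?thesis
      by (simp add: algebra_simps)
  qed
  then have "w - r * (w - real k + 1) \<le> 0"
    by (rule nonpos_if_multiples_bounded)
  with \<open>0 < r\<close> \<open>0 < w\<close> show ?thesis
    by simp
qed

lemma below_tradeoff_curve:
  fixes k :: nat and p r w :: real
  assumes "1 \<le> k" "0 \<le> p" "p < 1" "r < real k - p * (real k - 1)" "w < real k + p / (1 - p)"
    and "0 < r" "0 < w"
  shows "r * (w - real k + 1) < w"
proof (cases "w - real k + 1 \<le> 0")
  case True
  then have "r * (w - real k + 1) \<le> 0"
    using \<open>0 < r\<close> by (simp add: mult_nonneg_nonpos)
  with \<open>0 < w\<close> show ?thesis
    by linarith
next
  case False
  have "0 < 1 - p"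
    using \<open>p < 1\<close> by simp
  then have "(1 - p) * w < (1 - p) * (real k + p / (1 - p))"
    using \<open>w < real k + p / (1 - p)\<close> by (rule mult_strict_left_mono[rotated])
  also have "\<dots> = (1 - p) * real k + p"
    using \<open>0 < 1 - p\<close> by (simp add: field_simps)
  finally have "(1 - p) * w < (1 - p) * real k + p" .
  then have "(real k - 1) * ((1 - p) * w - ((1 - p) * real k + p)) \<le> 0"
    using \<open>1 \<le> k\<close> by (intro mult_nonneg_nonpos) auto
  moreover have "r * (w - real k + 1) < (real k - p * (real k - 1)) * (w - real k + 1)"
    using \<open>r < real k - p * (real k - 1)\<close> False by (intro mult_strict_right_mono) auto
  ultimately show ?thesis
    by (simp add: algebra_simps)
qed

definition layer0_advice :: "(nat \<Rightarrow> nat) \<Rightarrow> nat \<Rightarrow> bool" where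
  "layer0_advice l = (\<lambda>v. l v = 0)"

(* LEAST of an empty set is junk here; adversary_spec shows the set is nonempty when the
   algorithm is valid. *)
definition next_layer :: "algorithm \<Rightarrow> nat \<Rightarrow> nat \<Rightarrow> (nat \<Rightarrow> nat) \<Rightarrow> nat" where
  "next_layer A k t l =
     (LEAST i. i < k \<and> (\<forall>v<t. l v = i \<longrightarrow> v \<in> alg_set A (layered_graph l) (layer0_advice l) t))"

primrec adversary_prefix :: "algorithm \<Rightarrow> nat \<Rightarrow> nat \<Rightarrow> nat list" where
  "adversary_prefix A k 0 = []"
| "adversary_prefix A k (Suc t) =
     adversary_prefix A k t @ [next_layer A k t (nth (adversary_prefix A k t))]"

definition adversary :: "algorithm \<Rightarrow> nat \<Rightarrow> nat \<Rightarrow> nat" where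
  "adversary A k v = adversary_prefix A k (Suc v) ! v"

lemma next_layer_cong:
  assumes "\<And>v. v < t \<Longrightarrow> l v = l' v"
  shows "next_layer A k t l = next_layer A k t l'"
proof -
  have "alg_set A (layered_graph l) (layer0_advice l) t = alg_set A (layered_graph l') (layer0_advice l') t"
    using assms by (intro alg_set_cong) (simp_all add: layered_graph_def layer0_advice_def)
  with assms show ?thesis
    unfolding next_layer_def by metis
qed

lemma length_adversary_prefix [simp]: "length (adversary_prefix A k t) = t"
  by (induction t) auto

lemma nth_adversary_prefix: "v < t \<Longrightarrow> adversary_prefix A k t ! v = adversary A k v"
proof (induction t)
  case (Suc t)
  then show ?case
    by (cases "v = t") (auto simp: adversary_def nth_append)
qed simp

lemma adversary_unfold: "adversary A k t = next_layer A k t (adversary A k)"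
proof -
  have "adversary A k t = next_layer A k t (nth (adversary_prefix A k t))"
    unfolding adversary_def by (simp add: nth_append)
  also have "\<dots> = next_layer A k t (adversary A k)"
    by (rule next_layer_cong) (simp add: nth_adversary_prefix)
  finally show ?thesis .
qed

locale path_deletion_algorithm =
  fixes A :: algorithm and k :: nat
  assumes valid: "valid_alg (path_V k) path_E A" and k_ge_4: "4 \<le> k"
begin

abbreviation adv :: "nat \<Rightarrow> nat" where
  "adv \<equiv> adversary A k"

abbreviation adv_set :: "nat \<Rightarrow> nat set" where
  "adv_set t \<equiv> alg_set A (layered_graph adv) (layer0_advice adv) t"

definition last_of_layer :: "nat \<Rightarrow> nat set" where
  "last_of_layer n = {v. v < n \<and> (\<forall>w. v < w \<and> w < n \<longrightarrow> adv w \<noteq> adv v)}"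

lemma adversary_spec: "adv t < k \<and> (\<forall>v<t. adv v = adv t \<longrightarrow> v \<in> adv_set t)"
proof -
  define P where "P i \<longleftrightarrow> i < k \<and> (\<forall>v<t. adv v = i \<longrightarrow> v \<in> adv_set t)" for i
  have "\<exists>i. P i"
  proof (rule ccontr)
    assume "\<nexists>i. P i"
    then have hit: "\<forall>i<k. \<exists>v\<in>{0..<t} - adv_set t. adv v = i"
      unfolding P_def by (metis Diff_iff atLeastLessThan_iff zero_le)
    moreover have "0 < k"
      using k_ge_4 by simp
    ultimately obtain v where "v \<in> {0..<t}"
      by blast
    then have "H_free (path_V k) path_E ({0..<t} - adv_set t) (layered_graph adv)"
      using valid_alg_H_free[OF valid simple_graph_layered_graph] by simp
    with has_induced_path_if_layers_hit[OF hit] show False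
      unfolding H_free_def by blast
  qed
  then have "P (LEAST i. P i)"
    by (rule LeastI_ex)
  moreover have "adv t = (LEAST i. P i)"
    unfolding P_def by (rule trans[OF adversary_unfold]) (simp only: next_layer_def)
  ultimately have "P (adv t)"
    by (simp only:)
  then show ?thesis
    unfolding P_def by blast
qed

lemma adversary_lt: "adv v < k"
  using adversary_spec by blast

lemma adversary_labels: "\<forall>v<n. adv v < k"
  using adversary_lt by simp

lemma adversary_deleted:
  assumes "v < w" "w \<le> n" "adv v = adv w"
  shows "v \<in> adv_set n"
proof -
  have "v \<in> adv_set w"
    using adversary_spec[of w] assms(1,3) by simp
  moreover have "adv_set w \<subseteq> adv_set n"
    using valid_alg_mono[OF valid simple_graph_layered_graph] assms(1,2) by simp
  ultimately show ?thesis
    by blast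
qed

lemma card_ge_if_adv_set_subset:
  assumes "finite X" "adv_set n \<subseteq> X"
  shows "n \<le> card X + card (last_of_layer n - X)"
proof -
  have "{0..<n} \<subseteq> X \<union> (last_of_layer n - X)"
  proof
    fix v assume "v \<in> {0..<n}"
    show "v \<in> X \<union> (last_of_layer n - X)"
    proof (cases "v \<in> last_of_layer n")
      case False
      with \<open>v \<in> {0..<n}\<close> obtain w where "v < w" "w < n" "adv w = adv v"
        unfolding last_of_layer_def by auto
      then have "v \<in> adv_set n"
        using adversary_deleted[of v w n] by simp
      with assms(2) show ?thesis
        by blast
    qed simp
  qed
  then have "n \<le> card (X \<union> (last_of_layer n - X))"
    using assms(1) card_mono[of "X \<union> (last_of_layer n - X)" "{0..<n}"]
    unfolding last_of_layer_def by auto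
  also have "\<dots> \<le> card X + card (last_of_layer n - X)"
    by (rule card_Un_le)
  finally show ?thesis .
qed

lemma inj_on_last_of_layer: "inj_on adv (last_of_layer n)"
proof (rule inj_onI)
  fix v w assume "v \<in> last_of_layer n" "w \<in> last_of_layer n" "adv v = adv w"
  then show "v = w"
    unfolding last_of_layer_def by (metis (mono_tags, lifting) linorder_neqE_nat mem_Collect_eq)
qed

lemma card_last_of_layer: "card (last_of_layer n) \<le> k"
proof -
  have "card (last_of_layer n) = card (adv ` last_of_layer n)"
    using inj_on_last_of_layer by (simp add: card_image)
  also have "\<dots> \<le> card {..<k}"
    using adversary_lt by (intro card_mono) auto
  finally show ?thesis
    by simp
qed

lemma card_last_of_layer_diff_layer0: "card (last_of_layer n - layer_set adv 0 n) \<le> k - 1"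
proof -
  have "card (last_of_layer n - layer_set adv 0 n) = card (adv ` (last_of_layer n - layer_set adv 0 n))"
    using inj_on_last_of_layer by (simp add: card_image inj_on_diff)
  also have "\<dots> \<le> card {1..<k}"
    using adversary_lt
    by (intro card_mono) (auto simp: last_of_layer_def layer_set_def Suc_le_eq)
  finally show ?thesis
    by simp
qed

lemma sum_card_layer_set: "n = (\<Sum>j<k. card (layer_set adv j n))"
proof -
  have "{..<n} = (\<Union>j<k. layer_set adv j n)"
    using adversary_lt unfolding layer_set_def by auto
  moreover have "card (\<Union>j<k. layer_set adv j n) = (\<Sum>j<k. card (layer_set adv j n))"
    by (rule card_UN_disjoint) (auto simp: layer_set_def)
  ultimately show ?thesis
    by (metis card_lessThan)
qed

lemma robust_cost_lower_bound:
  assumes "1 \<le> n"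
  shows "n \<le> alg_cost A n (layered_graph adv) (layer0_advice adv) + k"
proof -
  have "finite (adv_set n)"
    using valid_alg_subset[OF valid simple_graph_layered_graph assms] finite_subset by blast
  then have "n \<le> card (adv_set n) + card (last_of_layer n - adv_set n)"
    using card_ge_if_adv_set_subset by blast
  also have "\<dots> \<le> card (adv_set n) + card (last_of_layer n)"
    by (simp add: card_mono last_of_layer_def)
  also have "\<dots> \<le> card (adv_set n) + k"
    using card_last_of_layer by simp
  finally show ?thesis
    using assms unfolding alg_cost_def by simp
qed

lemma adv_set_subset_padded_alg_set:
  assumes "1 \<le> n"
    and correct: "correct_advice (path_V k) path_E (padded_size k n) (layered_graph (padded_layers k n adv)) u"
  shows "adv_set n \<subseteq> alg_set A (layered_graph (padded_layers k n adv)) u (padded_size k n)"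
proof -
  let ?N = "padded_size k n" and ?G = "layered_graph (padded_layers k n adv)"
  have "n \<le> ?N"
    by (simp add: padded_size_def)
  have advice: "{i. i < ?N \<and> u i} = layer_set adv 0 n"
    using correct_advice_padded_layers(1)[OF k_ge_4 adversary_labels correct] .
  have "alg_set A ?G u n = adv_set n"
  proof (rule alg_set_cong)
    fix i assume "i < n"
    have "i \<in> {i. i < ?N \<and> u i} \<longleftrightarrow> i \<in> layer_set adv 0 n"
      by (simp only: advice)
    with \<open>i < n\<close> \<open>n \<le> ?N\<close> show "u i = layer0_advice adv i"
      unfolding layer_set_def layer0_advice_def by simp
  next
    fix x y assume "x < n" "y < n"
    then show "?G x y = layered_graph adv x y"
      unfolding layered_graph_def padded_layers_def by simp
  qed
  moreover have "alg_set A ?G u n \<subseteq> alg_set A ?G u ?N"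
    by (rule valid_alg_mono[OF valid simple_graph_layered_graph \<open>1 \<le> n\<close> \<open>n \<le> ?N\<close>])
  ultimately show ?thesis
    by simp
qed

lemma consistent_cost_lower_bound:
  assumes "1 \<le> n"
    and correct: "correct_advice (path_V k) path_E (padded_size k n) (layered_graph (padded_layers k n adv)) u"
  shows "n \<le> alg_cost A (padded_size k n) (layered_graph (padded_layers k n adv)) u + (k - 1)"
proof -
  let ?N = "padded_size k n" and ?G = "layered_graph (padded_layers k n adv)"
  define S where "S = alg_set A ?G u ?N"
  have "adv_set n \<subseteq> S"
    unfolding S_def by (rule adv_set_subset_padded_alg_set[OF assms])
  have "1 \<le> ?N"
    using \<open>1 \<le> n\<close> by (simp add: padded_size_def)
  have "S \<subseteq> {0..<?N}"
    unfolding S_def by (rule valid_alg_subset[OF valid simple_graph_layered_graph \<open>1 \<le> ?N\<close>])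
  then have "finite S"
    by (rule finite_subset) simp
  have "H_free (path_V k) path_E ({0..<?N} - S) ?G"
    unfolding S_def by (rule valid_alg_H_free[OF valid simple_graph_layered_graph \<open>1 \<le> ?N\<close>])
  then obtain i where "i < k" and layer_in_S: "layer_set (padded_layers k n adv) i ?N \<subseteq> S"
    using H_free_remainder_contains_layer by blast
  have "n \<le> card S + (k - 1)"
  proof (cases "i = 0")
    case True
    with layer_in_S have "last_of_layer n - S \<subseteq> last_of_layer n - layer_set adv 0 n"
      by (auto simp: layer_set_padded_layers_0)
    then have "card (last_of_layer n - S) \<le> card (last_of_layer n - layer_set adv 0 n)"
      by (rule card_mono[rotated]) (simp add: last_of_layer_def)
    with card_last_of_layer_diff_layer0[of n] have "card (last_of_layer n - S) \<le> k - 1"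
      by linarith
    with card_ge_if_adv_set_subset[OF \<open>finite S\<close> \<open>adv_set n \<subseteq> S\<close>] show ?thesis
      by linarith
  next
    case False
    then show ?thesis
      using card_layer_set_padded_layers[of i k n adv] \<open>i < k\<close> card_mono[OF \<open>finite S\<close> layer_in_S]
      by linarith
  qed
  with \<open>1 \<le> ?N\<close> show ?thesis
    unfolding alg_cost_def S_def by simp
qed

lemma competitive_tradeoff:
  assumes "competitive (path_V k) path_E A r w"
  shows "0 < r \<and> 0 < w \<and> w \<le> r * (w - real k + 1)"
proof -
  obtain \<alpha> :: real where bounds: "\<And>n E. simple_graph E \<Longrightarrow>
      (\<exists>u. correct_advice (path_V k) path_E n E u \<and>
           real (alg_cost A n E u) \<le> r * real (OPT (path_V k) path_E n E) + \<alpha>) \<and>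
      (\<forall>u. real (alg_cost A n E u) \<le> w * real (OPT (path_V k) path_E n E) + \<alpha>)"
    using assms unfolding competitive_def by blast
  show ?thesis
  proof (rule consistency_robustness_tradeoff)
    show "1 \<le> k"
      using k_ge_4 by simp
    show "real n = (\<Sum>j<k. real (card (layer_set adv j n)))" for n
      using sum_card_layer_set[of n] by (metis of_nat_sum)
    show "0 \<le> real (OPT (path_V k) path_E n (layered_graph adv))
        \<and> real (OPT (path_V k) path_E n (layered_graph adv)) \<le> real (card (layer_set adv j n))"
      if "j < k" for n j
      using OPT_le_card_layer[OF k_ge_4 adversary_labels that] by simp
    show "real n - real k \<le> w * real (OPT (path_V k) path_E n (layered_graph adv)) + \<alpha>"
      if "1 \<le> n" for n
    proof -
      have "real n \<le> real (alg_cost A n (layered_graph adv) (layer0_advice adv)) + real k"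
        using robust_cost_lower_bound[OF that] by (metis of_nat_add of_nat_le_iff)
      moreover have "real (alg_cost A n (layered_graph adv) (layer0_advice adv))
          \<le> w * real (OPT (path_V k) path_E n (layered_graph adv)) + \<alpha>"
        using bounds[OF simple_graph_layered_graph] by blast
      ultimately show ?thesis
        by linarith
    qed
    show "real n - (real k - 1) \<le> r * real (card (layer_set adv 0 n)) + \<alpha>"
      if "1 \<le> n" for n
    proof -
      obtain u where correct: "correct_advice (path_V k) path_E (padded_size k n) (layered_graph (padded_layers k n adv)) u"
        and "real (alg_cost A (padded_size k n) (layered_graph (padded_layers k n adv)) u)
          \<le> r * real (OPT (path_V k) path_E (padded_size k n) (layered_graph (padded_layers k n adv))) + \<alpha>"
        using bounds[OF simple_graph_layered_graph] by blast
      moreover have "real n \<le> real (alg_cost A (padded_size k n) (layered_graph (padded_layers k n adv)) u) + (real k - 1)"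
        using consistent_cost_lower_bound[OF that correct] k_ge_4 by (simp add: of_nat_diff flip: of_nat_add of_nat_le_iff)
      ultimately show ?thesis
        using correct_advice_padded_layers(2)[OF k_ge_4 adversary_labels correct] by simp
    qed
  qed
qed

end

theorem mainTheorem9:
  fixes k :: nat and p :: real
  assumes "k \<ge> 5" and "0 \<le> p" and "p < 1"
  shows "\<not> (\<exists>A r w. valid_alg (path_V k) path_E A \<and>
                    competitive (path_V k) path_E A r w \<and>
                    r < real k - p * (real k - 1) \<and>
                    w < real k + p / (1 - p))"
proof
  assume "\<exists>A r w. valid_alg (path_V k) path_E A \<and> competitive (path_V k) path_E A r w \<and>
                    r < real k - p * (real k - 1) \<and> w < real k + p / (1 - p)"
  then obtain A r w where "valid_alg (path_V k) path_E A" and "competitive (path_V k) path_E A r w"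
    and r: "r < real k - p * (real k - 1)" and w: "w < real k + p / (1 - p)"
    by blast
  then interpret path_deletion_algorithm A k
    using \<open>k \<ge> 5\<close> by unfold_locales auto
  have "0 < r" "0 < w" "w \<le> r * (w - real k + 1)"
    using competitive_tradeoff[OF \<open>competitive (path_V k) path_E A r w\<close>] by auto
  moreover have "r * (w - real k + 1) < w"
    using below_tradeoff_curve[OF _ \<open>0 \<le> p\<close> \<open>p < 1\<close> r w] \<open>k \<ge> 5\<close> \<open>0 < r\<close> \<open>0 < w\<close> by simp
  ultimately show False
    by linarith
qed

end
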